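(* Let $\theta\ge1$ and let $V:\mathbb R_+\to\mathbb R$ be smooth with compact support contained in $(1,\infty)$ and with $\int_0^\infty V(y)\,y^{-2}\,dy\neq0$. Let $\psi_V$ be the function on $M$ supported in $B$ given by $\psi_V(x+iy)=V(y)$ for $y>1$ (the incomplete Eisenstein series $\sum_{\gamma\in\Gamma_\infty\backslash\Gamma}V(\Im\gamma z)$). Then, for even $k\to\infty$ and any choice of $f\in H_k$, \[ \mu_f\big(M_{(k-1)^\theta}\psi_V\big)=o\big(\nu(M_{(k-1)^\theta}\psi_V)\big). \]
   Context: Let $\Gamma=\mathrm{PSL}_2(\mathbb Z)$, $\Gamma_\infty$ its stabilizer of $\infty$, $M=\Gamma\backslash\mathbb H$, $z=x+iy$, $d\mu=y^{-2}dx\,dy$, $\mathrm{vol}(M)=\pi/3$, $\nu(\psi)=\frac1{\mathrm{vol}(M)}\int_M\psi\,d\mu$. For even $k$, $H_k$ is a basis of weight $k$ holomorphic cusp forms for $\mathrm{SL}_2(\mathbb Z)$ consisting of Hecke eigenforms normalized by $\int_M y^k|f|^2d\mu=1$, and $\mu_f(\psi)=\int_M\psi(z)y^k|f(z)|^2d\mu(z)$. $B=\{z\in M:\Im z>1\}$ (the region $y>1$ of the standard fundamental domain). For $\psi$ supported in $B$ and $H\ge1$, $M_H\psi(x+iy)=\psi(x+iy/H)$ for $y>H$ and $M_H\psi=0$ elsewhere. *)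

theory Defs
  imports "HOL-Analysis.Analysis"
begin

definition upper_half :: "complex set" where
  "upper_half = {z. Im z > 0}"

(* Standard (closed) fundamental domain of PSL_2(Z); M is identified with it
   up to a null set. *)
definition fund_dom :: "complex set" where
  "fund_dom = {z. Im z > 0 \<and> \<bar>Re z\<bar> \<le> 1/2 \<and> cmod z \<ge> 1}"

(* Integral over M w.r.t. d mu = y^-2 dx dy of a function given on the
   fundamental domain *)
definition int_M :: "(complex \<Rightarrow> real) \<Rightarrow> real" where
  "int_M g = (LINT z:fund_dom|lborel. g z / (Im z)^2)"

definition volM :: real where "volM = pi / 3"

definition nu :: "(complex \<Rightarrow> real) \<Rightarrow> real" where
  "nu \<psi> = int_M \<psi> / volM"

definition cusp_form :: "nat \<Rightarrow> (complex \<Rightarrow> complex) \<Rightarrow> bool" where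
  "cusp_form k f \<longleftrightarrow>
     f holomorphic_on upper_half \<and>
     (\<forall>a b c d :: int. a * d - b * c = 1 \<longrightarrow>
        (\<forall>z\<in>upper_half. f ((of_int a * z + of_int b) / (of_int c * z + of_int d))
                         = (of_int c * z + of_int d) ^ k * f z)) \<and>
     (\<forall>\<epsilon>>0. \<exists>Y. \<forall>z. Im z \<ge> Y \<longrightarrow> cmod (f z) \<le> \<epsilon>)"

definition hecke :: "nat \<Rightarrow> nat \<Rightarrow> (complex \<Rightarrow> complex) \<Rightarrow> complex \<Rightarrow> complex" where
  "hecke k n f z = of_nat n ^ (k - 1) *
     (\<Sum>(a, b, d) \<in> {(a, b, d). a * d = n \<and> b < d}.
        f ((of_nat a * z + of_nat b) / of_nat d) / of_nat d ^ k)"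

definition hecke_eigenform :: "nat \<Rightarrow> (complex \<Rightarrow> complex) \<Rightarrow> bool" where
  "hecke_eigenform k f \<longleftrightarrow>
     (\<forall>n\<ge>1. \<exists>c::complex. \<forall>z\<in>upper_half. hecke k n f z = c * f z)"

definition mu_f :: "nat \<Rightarrow> (complex \<Rightarrow> complex) \<Rightarrow> (complex \<Rightarrow> real) \<Rightarrow> real" where
  "mu_f k f \<psi> = int_M (\<lambda>z. \<psi> z * Im z ^ k * (cmod (f z))^2)"

definition Hk :: "nat \<Rightarrow> (complex \<Rightarrow> complex) set" where
  "Hk k = {f. cusp_form k f \<and> hecke_eigenform k f \<and> mu_f k f (\<lambda>_. 1) = 1}"

definition psiV :: "(real \<Rightarrow> real) \<Rightarrow> complex \<Rightarrow> real" where
  "psiV V z = (if Im z > 1 then V (Im z) else 0)"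

definition MH :: "real \<Rightarrow> (complex \<Rightarrow> real) \<Rightarrow> complex \<Rightarrow> real" where
  "MH H \<psi> z = (if Im z > H then \<psi> (Complex (Re z) (Im z / H)) else 0)"

definition smooth_pos :: "(real \<Rightarrow> real) \<Rightarrow> bool" where
  "smooth_pos V \<longleftrightarrow> (\<forall>n. \<forall>y>0. (deriv ^^ n) V differentiable (at y))"

end

theory Submission
  imports Defs "HOL-Complex_Analysis.Complex_Analysis"
begin

text \<open>For theta >= 1 the test function M_H psi_V, with H = (k-1)^theta, lives at heights y in
  [a H, b H] with a > 1, far above the height ~ k/(4 pi) where the mass of y^k |f|^2 sits. There
  y^k |f(z)|^2 is exponentially small: f(z) = F(exp (2 pi i z)) with F holomorphic on the unit disc
  and F(0) = 0, and Cauchy's formula on a horocycle Im z = s ~ y/2, chosen with the help of the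
  L^2-normalisation of f, gives y^(k-2) |f(z)|^2 <= 2^k e^(4 pi) e^(-2 pi y). Hence
  mu_f(M_H psi_V) = O(H^-2), while nu(M_H psi_V) = (3/pi) H^-1 integral V(y) y^-2 dy.\<close>

definition periodic_cuspidal :: "(complex \<Rightarrow> complex) \<Rightarrow> bool" where
  "periodic_cuspidal f \<longleftrightarrow>
     f holomorphic_on upper_half \<and>
     (\<forall>z\<in>upper_half. \<forall>n::int. f (z + of_int n) = f z) \<and>
     (\<forall>\<epsilon>>0. \<exists>Y. \<forall>z. Im z \<ge> Y \<longrightarrow> cmod (f z) \<le> \<epsilon>)"

lemma cusp_form_imp_periodic_cuspidal:
  assumes "cusp_form k f"
  shows "periodic_cuspidal f"
proof -
  have "f (z + of_int n) = f z" if "z \<in> upper_half" for z and n :: int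
  proof -
    have "f ((of_int 1 * z + of_int n) / (of_int 0 * z + of_int 1)) = (of_int 0 * z + of_int 1) ^ k * f z"
      using assms that unfolding cusp_form_def by (metis mult_1 mult_zero_right diff_zero)
    then show ?thesis by simp
  qed
  then show ?thesis using assms by (simp add: periodic_cuspidal_def cusp_form_def)
qed

lemma upper_half_iff: "z \<in> upper_half \<longleftrightarrow> Im z > 0"
  by (simp add: upper_half_def)

lemma open_upper_half: "open upper_half"
  by (simp add: upper_half_def open_halfspace_Im_gt)

lemma norm_exp_2pi_i: "cmod (exp (2 * of_real pi * \<i> * z)) = exp (- 2 * pi * Im z)"
  by (simp add: norm_exp_eq_Re)

lemma Im_Ln_div_2pi_i:
  assumes "w \<noteq> 0"
  shows "Im (Ln w / (2 * of_real pi * \<i>)) = - ln (cmod w) / (2 * pi)"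
proof -
  have "Ln w / (2 * of_real pi * \<i>) = - \<i> * Ln w / of_real (2 * pi)"
    by (simp add: field_simps)
  then show ?thesis using assms by simp
qed

text \<open>The function F with f z = F (exp (2 pi i z)); its value at 0 is the one forced by the decay
  of f at the cusp.\<close>

definition q_expansion :: "(complex \<Rightarrow> complex) \<Rightarrow> complex \<Rightarrow> complex" where
  "q_expansion f w = (if w = 0 then 0 else f (Ln w / (2 * of_real pi * \<i>)))"

lemma q_expansion_exp:
  assumes "periodic_cuspidal f" and "z \<in> upper_half"
  shows "q_expansion f (exp (2 * of_real pi * \<i> * z)) = f z"
proof -
  define w where "w = exp (2 * of_real pi * \<i> * z)"
  have "w \<noteq> 0" by (simp add: w_def)
  have "exp (Ln w) = exp (2 * of_real pi * \<i> * z)" using \<open>w \<noteq> 0\<close> by (simp add: w_def)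
  then obtain n :: int where "Ln w = 2 * of_real pi * \<i> * z + (of_int (2 * n) * pi) * \<i>"
    using exp_eq by blast
  then have "Ln w / (2 * of_real pi * \<i>) = z + of_int n"
    by (simp add: field_simps)
  then show ?thesis
    using \<open>w \<noteq> 0\<close> assms by (simp add: q_expansion_def periodic_cuspidal_def flip: w_def)
qed

lemma q_expansion_field_differentiable:
  assumes f: "periodic_cuspidal f" and w0: "w0 \<noteq> 0" "cmod w0 < 1"
  shows "q_expansion f field_differentiable (at w0)"
proof -
  define c where "c = 2 * of_real pi * \<i>"
  have "c \<noteq> 0" by (simp add: c_def)
  txt \<open>A branch of Ln w / c near w0 that avoids the cut of Ln.\<close>
  define \<phi> where "\<phi> w = Ln w0 / c + Ln (w / w0) / c" for w
  define d where "d = min (cmod w0) (1 - cmod w0)"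
  have "d > 0" using w0 by (simp add: d_def)
  have local_eq: "(f \<circ> \<phi>) w = q_expansion f w" if "dist w w0 < d" for w
  proof -
    have "cmod (w - w0) < cmod w0" "cmod (w - w0) < 1 - cmod w0"
      using that by (auto simp: d_def dist_norm)
    then have "w \<noteq> 0" "cmod w < 1"
      using norm_triangle_ineq2[of w w0] by auto
    have ex: "exp (c * \<phi> w) = w"
      using \<open>c \<noteq> 0\<close> \<open>w \<noteq> 0\<close> w0 by (simp add: \<phi>_def distrib_left exp_add)
    then have "exp (- 2 * pi * Im (\<phi> w)) < 1"
      using norm_exp_2pi_i[of "\<phi> w"] \<open>cmod w < 1\<close> by (simp add: c_def)
    then have "\<phi> w \<in> upper_half"
      by (simp add: upper_half_iff zero_less_mult_iff)
    from q_expansion_exp[OF f this] ex show ?thesis by (simp add: c_def)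
  qed
  have "\<phi> field_differentiable (at w0)"
  proof -
    have "(\<lambda>w. w / w0) field_differentiable (at w0)"
      using w0(1) by (intro derivative_intros field_differentiable_divide) auto
    moreover have "Ln field_differentiable (at (w0 / w0))"
      using w0(1) by (intro field_differentiable_at_Ln) (simp add: nonpos_Reals_def)
    ultimately have "(Ln \<circ> (\<lambda>w. w / w0)) field_differentiable (at w0)"
      by (intro field_differentiable_compose) auto
    then show ?thesis unfolding \<phi>_def o_def
      by (intro field_differentiable_add field_differentiable_divide) (auto simp: \<open>c \<noteq> 0\<close>)
  qed
  moreover have "f field_differentiable (at (\<phi> w0))"
  proof -
    have "Im (Ln w0 / c) > 0"
      using w0 by (simp add: c_def Im_Ln_div_2pi_i divide_neg_pos ln_less_zero_iff)
    then have "\<phi> w0 \<in> upper_half" using w0(1) by (simp add: \<phi>_def upper_half_iff)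
    then show ?thesis
      using f open_upper_half holomorphic_on_imp_differentiable_at
      unfolding periodic_cuspidal_def by blast
  qed
  ultimately have "(f \<circ> \<phi>) field_differentiable (at w0)"
    by (rule field_differentiable_compose)
  then show ?thesis
    using field_differentiable_transform_within[OF \<open>d > 0\<close>, of w0 UNIV "f \<circ> \<phi>"] local_eq
    by auto
qed

lemma q_expansion_tendsto_0:
  assumes "periodic_cuspidal f"
  shows "(q_expansion f \<longlongrightarrow> 0) (at 0)"
  unfolding Lim_at
proof (intro allI impI)
  fix e :: real assume "e > 0"
  then obtain Y where Y: "\<And>z. Im z \<ge> Y \<Longrightarrow> cmod (f z) \<le> e / 2"
    using assms unfolding periodic_cuspidal_def by (meson half_gt_zero)
  define d where "d = exp (- 2 * pi * max Y 1)"
  have "d > 0" by (simp add: d_def)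
  moreover have "cmod (q_expansion f w) < e" if "0 < dist w 0" "dist w 0 < d" for w
  proof -
    have "w \<noteq> 0" and "ln (cmod w) < ln d" using that \<open>d > 0\<close> by auto
    then have "max Y 1 * (2 * pi) < - ln (cmod w)" by (simp add: d_def algebra_simps)
    then have "- ln (cmod w) / (2 * pi) > max Y 1" by (subst pos_less_divide_eq) auto
    then have "Im (Ln w / (2 * of_real pi * \<i>)) \<ge> Y"
      using Im_Ln_div_2pi_i[OF \<open>w \<noteq> 0\<close>] by simp
    then show ?thesis using Y \<open>w \<noteq> 0\<close> \<open>e > 0\<close> by (force simp: q_expansion_def)
  qed
  ultimately show "\<exists>d>0. \<forall>x. 0 < dist x 0 \<and> dist x 0 < d \<longrightarrow> dist (q_expansion f x) 0 < e"
    by auto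
qed

lemma q_expansion_holomorphic:
  assumes "periodic_cuspidal f"
  shows "q_expansion f holomorphic_on ball 0 1"
proof (rule no_isolated_singularity'[where K = "{0}"])
  show "(q_expansion f \<longlongrightarrow> q_expansion f z) (at z within ball 0 1)" if "z \<in> {0}" for z
    using that q_expansion_tendsto_0[OF assms]
    by (auto simp: q_expansion_def intro: tendsto_within_subset)
  show "q_expansion f holomorphic_on (ball 0 1 - {0})"
    using q_expansion_field_differentiable[OF assms]
    by (simp add: holomorphic_on_open open_delete field_differentiable_def)
qed auto

lemma norm_le_circle_integral:
  fixes G :: "complex \<Rightarrow> complex"
  assumes holG: "G holomorphic_on cball 0 \<rho>" and w: "cmod w < \<rho>"
  shows "cmod (G w) \<le> \<rho> / (\<rho> - cmod w) * integral {0..1} (\<lambda>t. cmod (G (circlepath 0 \<rho> t)))"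
proof -
  let ?\<gamma> = "circlepath 0 \<rho>"
  define L where "L = integral {0..1} (\<lambda>t. cmod (G (?\<gamma> t)))"
  have "\<rho> > 0" using w norm_ge_zero by (meson le_less_trans)
  have "((\<lambda>u. G u / (u - w)) has_contour_integral (2 * of_real pi * \<i> * G w)) ?\<gamma>"
    using holG by (rule Cauchy_integral_circlepath_simple) (use w in simp)
  then have Cauchy: "((\<lambda>t. G (?\<gamma> t) / (?\<gamma> t - w) * vector_derivative ?\<gamma> (at t))
      has_integral (2 * of_real pi * \<i> * G w)) {0..1}"
    by (simp add: has_contour_integral)
  have "continuous_on {0..1} (G \<circ> ?\<gamma>)"
  proof (rule continuous_on_compose)
    show "continuous_on {0..1} ?\<gamma>" using path_circlepath by (simp add: path_def)
    have "path_image ?\<gamma> \<subseteq> cball 0 \<rho>" using \<open>\<rho> > 0\<close> by auto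
    then show "continuous_on (?\<gamma> ` {0..1}) G"
      using holomorphic_on_imp_continuous_on[OF holG] continuous_on_subset
      unfolding path_image_def by blast
  qed
  then have int: "(\<lambda>t. 2 * pi * \<rho> * cmod (G (?\<gamma> t)) / (\<rho> - cmod w)) integrable_on {0..1}"
    using w by (intro integrable_continuous_interval continuous_intros) (auto simp: o_def)
  have "norm (G (?\<gamma> t) / (?\<gamma> t - w) * vector_derivative ?\<gamma> (at t))
          \<le> 2 * pi * \<rho> * cmod (G (?\<gamma> t)) / (\<rho> - cmod w)" if "t \<in> {0..1}" for t
  proof -
    have "cmod (?\<gamma> t) = \<rho>" using \<open>\<rho> > 0\<close> by (simp add: circlepath norm_mult)
    then have "\<rho> - cmod w \<le> cmod (?\<gamma> t - w)"
      using norm_triangle_ineq2[of "?\<gamma> t" w] by linarith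
    moreover have "cmod (vector_derivative ?\<gamma> (at t)) = 2 * pi * \<rho>"
      using \<open>\<rho> > 0\<close> by (simp add: vector_derivative_circlepath norm_mult)
    ultimately show ?thesis
      using \<open>\<rho> > 0\<close> w by (simp add: norm_mult norm_divide frac_le)
  qed
  then have "norm (2 * of_real pi * \<i> * G w) \<le> integral {0..1} (\<lambda>t. 2 * pi * \<rho> * cmod (G (?\<gamma> t)) / (\<rho> - cmod w))"
    using integral_norm_bound_integral[OF has_integral_integrable[OF Cauchy] int] integral_unique[OF Cauchy]
    by simp
  also have "\<dots> = 2 * pi * (\<rho> / (\<rho> - cmod w) * L)"
    by (simp add: L_def divide_inverse mult.assoc)
  finally have "2 * pi * cmod (G w) \<le> 2 * pi * (\<rho> / (\<rho> - cmod w) * L)"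
    by (simp add: norm_mult)
  then show ?thesis
    unfolding L_def by (rule mult_left_le_imp_le) (use pi_gt_zero in simp)
qed

lemma norm_le_circle_integral_if_vanishing_at_0:
  fixes F :: "complex \<Rightarrow> complex"
  assumes holF: "F holomorphic_on ball 0 r" and F0: "F 0 = 0" and "\<rho> < r" and w: "cmod w < \<rho>"
  shows "cmod (F w) \<le> cmod w / (\<rho> - cmod w) * integral {0..1} (\<lambda>t. cmod (F (circlepath 0 \<rho> t)))"
proof -
  have "\<rho> > 0" using w norm_ge_zero by (meson le_less_trans)
  define G where "G = (\<lambda>u. if u = 0 then deriv F 0 else (F u - F 0) / (u - 0))"
  have "G holomorphic_on ball 0 r"
    unfolding G_def by (rule pole_lemma[OF holF]) (use \<open>\<rho> < r\<close> \<open>\<rho> > 0\<close> in simp)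
  then have "G holomorphic_on cball 0 \<rho>"
    by (rule holomorphic_on_subset) (use \<open>\<rho> < r\<close> in auto)
  from norm_le_circle_integral[OF this w]
  have "cmod (G w) \<le> \<rho> / (\<rho> - cmod w) * integral {0..1} (\<lambda>t. cmod (F (circlepath 0 \<rho> t)) / \<rho>)"
    using \<open>\<rho> > 0\<close> by (simp add: G_def F0 norm_divide circlepath norm_mult)
  also have "\<dots> = integral {0..1} (\<lambda>t. cmod (F (circlepath 0 \<rho> t))) / (\<rho> - cmod w)"
    using \<open>\<rho> > 0\<close> by (simp add: integral_divide)
  finally have "cmod w * cmod (G w) \<le> cmod w * (integral {0..1} (\<lambda>t. cmod (F (circlepath 0 \<rho> t))) / (\<rho> - cmod w))"
    by (rule mult_left_mono) simp
  moreover have "F w = w * G w" by (simp add: G_def F0)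
  ultimately show ?thesis by (simp add: norm_mult)
qed

lemma circlepath_exp_2pi_i: "circlepath 0 (exp (- 2 * pi * s)) t = exp (2 * of_real pi * \<i> * Complex t s)"
proof -
  have "2 * of_real pi * \<i> * Complex t s = of_real (- 2 * pi * s) + 2 * of_real pi * \<i> * of_real t"
    by (simp add: complex_eq_iff)
  then have "exp (2 * of_real pi * \<i> * Complex t s)
      = exp (of_real (- 2 * pi * s)) * exp (2 * of_real pi * \<i> * of_real t)"
    by (simp only: exp_add)
  then show ?thesis by (simp only: circlepath exp_of_real) simp
qed

lemma exp_neg_2pi_lt_half: "exp (- 2 * pi) < 1 / 2"
proof -
  have "1 + 2 * pi \<le> exp (2 * pi)" by (rule exp_ge_add_one_self)
  then have "exp (2 * pi) > 2" using pi_gt3 by linarith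
  then show ?thesis by (simp add: exp_minus field_simps)
qed

text \<open>The horocycle Im z = s is mapped onto the circle of radius exp (-2 pi s), where Cauchy's
  formula applies to the q-expansion.\<close>

lemma periodic_cuspidal_le_horocycle_integral:
  assumes f: "periodic_cuspidal f" and "s > 0" and z: "Im z \<ge> s + 1"
  shows "cmod (f z) \<le> 2 * exp (- 2 * pi * (Im z - s)) * integral {0..1} (\<lambda>t. cmod (f (Complex t s)))"
proof -
  define \<rho> where "\<rho> = exp (- 2 * pi * s)"
  define w where "w = exp (2 * of_real pi * \<i> * z)"
  define r where "r = exp (- 2 * pi * (Im z - s))"
  define L where "L = integral {0..1} (\<lambda>t. cmod (f (Complex t s)))"
  have "\<rho> > 0" "\<rho> < 1" using \<open>s > 0\<close> by (auto simp: \<rho>_def)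
  have "cmod w = r * \<rho>"
    by (simp add: w_def r_def \<rho>_def norm_exp_2pi_i flip: exp_add) (simp add: algebra_simps)
  have "r \<le> exp (- 2 * pi)" using z by (simp add: r_def)
  then have "r < 1 / 2" using exp_neg_2pi_lt_half by linarith
  have "r > 0" by (simp add: r_def)
  have on_circle: "q_expansion f (circlepath 0 \<rho> t) = f (Complex t s)" for t
    unfolding \<rho>_def circlepath_exp_2pi_i
    using q_expansion_exp[OF f, of "Complex t s"] \<open>s > 0\<close> by (simp add: upper_half_iff)
  have "q_expansion f w = f z"
    using q_expansion_exp[OF f] z \<open>s > 0\<close> by (simp add: w_def upper_half_iff)
  moreover have "cmod (q_expansion f w) \<le> cmod w / (\<rho> - cmod w) * L"
    using norm_le_circle_integral_if_vanishing_at_0[OF q_expansion_holomorphic[OF f], of \<rho> w]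
      \<open>\<rho> < 1\<close> \<open>cmod w = r * \<rho>\<close> \<open>r < 1 / 2\<close> \<open>\<rho> > 0\<close>
    by (simp add: q_expansion_def[of _ 0] on_circle L_def)
  moreover have "cmod w / (\<rho> - cmod w) = r / (1 - r)"
    using \<open>\<rho> > 0\<close> \<open>r < 1 / 2\<close> by (simp add: \<open>cmod w = r * \<rho>\<close> field_simps)
  ultimately have bound: "cmod (f z) \<le> r / (1 - r) * L" by simp
  moreover have "r / (1 - r) > 0" using \<open>r < 1 / 2\<close> \<open>r > 0\<close> by simp
  ultimately have "L \<ge> 0" using norm_ge_zero[of "f z"] by (meson dual_order.trans zero_le_mult_iff linorder_not_le)
  moreover have "r / (1 - r) \<le> 2 * r" using \<open>r < 1 / 2\<close> \<open>r > 0\<close> by (simp add: field_simps)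
  ultimately show ?thesis
    using bound mult_right_mono[of "r / (1 - r)" "2 * r" L] by (simp add: r_def L_def)
qed

lemma square_integral_le:
  fixes g :: "real \<Rightarrow> real"
  assumes "a \<le> b" and g: "continuous_on {a..b} g"
  shows "(integral {a..b} g)^2 \<le> (b - a) * integral {a..b} (\<lambda>x. (g x)^2)"
proof (cases "a = b")
  case False
  define m where "m = integral {a..b} g / (b - a)"
  have int: "g integrable_on {a..b}" "(\<lambda>x. (g x)^2) integrable_on {a..b}"
    using g by (auto intro!: integrable_continuous_interval continuous_intros)
  have "0 \<le> integral {a..b} (\<lambda>x. (g x - m)^2)"
    using g by (intro integral_nonneg integrable_continuous_interval continuous_intros) auto
  also have "\<dots> = integral {a..b} (\<lambda>x. (g x)^2) - 2 * m * integral {a..b} g + m^2 * (b - a)"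
  proof (rule integral_unique)
    have "((\<lambda>x. (g x)^2 - 2 * m * g x + m^2) has_integral
          integral {a..b} (\<lambda>x. (g x)^2) - 2 * m * integral {a..b} g + (b - a) * m^2) {a..b}"
      using int \<open>a \<le> b\<close> has_integral_const_real[of "m^2" a b]
      by (intro has_integral_add has_integral_diff has_integral_mult_right integrable_integral) auto
    then show "((\<lambda>x. (g x - m)^2) has_integral
          integral {a..b} (\<lambda>x. (g x)^2) - 2 * m * integral {a..b} g + m^2 * (b - a)) {a..b}"
      by (simp add: power2_diff algebra_simps)
  qed
  also have "\<dots> = integral {a..b} (\<lambda>x. (g x)^2) - (integral {a..b} g)^2 / (b - a)"
  proof -
    have "J - 2 * (I / d) * I + (I / d)^2 * d = J - I^2 / d" if "d > 0" for I J d :: real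
      using that by (simp add: field_simps power2_eq_square)
    then show ?thesis using False \<open>a \<le> b\<close> by (simp add: m_def)
  qed
  finally show ?thesis using False \<open>a \<le> b\<close> by (simp add: field_simps)
qed simp

lemma exists_le_integral_unit_interval:
  fixes Q :: "real \<Rightarrow> real"
  assumes "continuous_on {a..a+1} Q"
  shows "\<exists>s\<in>{a..a+1}. Q s \<le> integral {a..a+1} Q"
proof -
  obtain s where s: "s \<in> {a..a+1}" and min: "\<And>y. y \<in> {a..a+1} \<Longrightarrow> Q s \<le> Q y"
    using continuous_attains_inf[OF compact_Icc _ assms] by fastforce
  have "integral {a..a+1} (\<lambda>_. Q s) \<le> integral {a..a+1} Q"
    using assms min by (intro integral_le integrable_continuous_interval) auto
  with s show ?thesis by auto
qed

lemma integral_periodic_shift_half: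
  fixes g :: "real \<Rightarrow> real"
  assumes cont: "continuous_on UNIV g" and per: "\<And>t. g (t + 1) = g t"
  shows "integral {0..1} g = integral {-1/2..1/2} g"
proof -
  have int: "g integrable_on {a..b}" for a b
    using cont by (auto intro: integrable_continuous_interval continuous_on_subset)
  have "integral {0..1} g = integral {0..1/2} g + integral {1/2..1} g"
    using Henstock_Kurzweil_Integration.integral_combine[where a = 0 and c = "1/2" and b = 1 and f = g] int by simp
  also have "integral {1/2..1} g = integral {1/2 - 1..1 - 1} (\<lambda>x. g (x + 1))"
    by (rule integral_shift_real_ivl[symmetric])
  also have "\<dots> = integral {-1/2..0} g" by (simp add: per)
  also have "integral {0..1/2} g + integral {-1/2..0} g = integral {-1/2..1/2} g"
    using Henstock_Kurzweil_Integration.integral_combine[where a = "-1/2" and c = 0 and b = "1/2" and f = g] int by simp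
  finally show ?thesis .
qed

lemma image_swap_Complex_cbox:
  "(\<lambda>(y, x). Complex x y) ` cbox (y0, x0) (y1, x1) = cbox (Complex x0 y0) (Complex x1 y1)"
proof (rule set_eqI, rule iffI)
  fix z assume "z \<in> cbox (Complex x0 y0) (Complex x1 y1)"
  then have "(Im z, Re z) \<in> cbox (y0, x0) (y1, x1)" "z = (\<lambda>(y, x). Complex x y) (Im z, Re z)"
    by (auto simp: in_cbox_complex_iff cbox_Pair_iff)
  then show "z \<in> (\<lambda>(y, x). Complex x y) ` cbox (y0, x0) (y1, x1)" by blast
qed (auto simp: in_cbox_complex_iff cbox_Pair_iff)

lemma image_Im_Re_cbox: "(\<lambda>z. (Im z, Re z)) ` cbox a b = cbox (Im a, Re a) (Im b, Re b)"
proof (rule set_eqI, rule iffI)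
  fix p :: "real \<times> real" assume "p \<in> cbox (Im a, Re a) (Im b, Re b)"
  then have "Complex (snd p) (fst p) \<in> cbox a b" "p = (\<lambda>z. (Im z, Re z)) (Complex (snd p) (fst p))"
    by (cases p; auto simp: in_cbox_complex_iff cbox_Pair_iff)+
  then show "p \<in> (\<lambda>z. (Im z, Re z)) ` cbox a b" by blast
qed (auto simp: in_cbox_complex_iff cbox_Pair_iff)

lemma content_cbox_Complex:
  "Henstock_Kurzweil_Integration.content (cbox (Complex a c) (Complex b d)) = Henstock_Kurzweil_Integration.content (cbox a b) * Henstock_Kurzweil_Integration.content (cbox c d)"
proof (cases "a \<le> b \<and> c \<le> d")
  case True
  then have "Complex a c \<in> cbox (Complex a c) (Complex b d)" by (simp add: in_cbox_complex_iff)
  then have "cbox (Complex a c) (Complex b d) \<noteq> {}" by blast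
  then show ?thesis using True by (simp add: content_cbox_if Basis_complex_def inner_complex_def)
next
  case False
  then have "cbox (Complex a c) (Complex b d) = {}" by (auto simp: in_cbox_complex_iff)
  then show ?thesis using False by auto
qed

lemma set_integral_cbox_Complex:
  fixes g :: "complex \<Rightarrow> real"
  assumes cont: "continuous_on (cbox (Complex x0 y0) (Complex x1 y1)) g"
  shows "set_integrable lborel (cbox (Complex x0 y0) (Complex x1 y1)) g"
    and "(LINT z:cbox (Complex x0 y0) (Complex x1 y1)|lborel. g z)
          = integral {y0..y1} (\<lambda>y. integral {x0..x1} (\<lambda>x. g (Complex x y)))"
proof -
  define S where "S = cbox (Complex x0 y0) (Complex x1 y1)"
  let ?P = "\<lambda>(y, x). Complex x y" and ?Q = "\<lambda>z. (Im z, Re z)"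
  show si: "set_integrable lborel S g"
    unfolding set_integrable_def by (rule borel_integrable_compact) (auto simp: S_def cont)
  have "(g has_integral integral S g) S"
    using cont by (auto simp: S_def intro!: integrable_integral integrable_continuous)
  txt \<open>Fubini, after identifying the complex plane with pairs (Im z, Re z).\<close>
  have "((\<lambda>p. g (?P p)) has_integral (1 / 1) *\<^sub>R integral S g) (?Q ` S)"
    unfolding S_def
  proof (rule has_integral_twiddle[where r = 1])
    show "continuous (at p) ?P" for p
      by (intro continuous_on_interior[where S = UNIV]) (auto simp: case_prod_beta intro!: continuous_intros)
    show "\<exists>w z. ?P ` cbox u v = cbox w z" for u v
      by (cases u; cases v) (auto simp: image_swap_Complex_cbox)
    show "\<exists>w z. ?Q ` cbox u v = cbox w z" for u v
      by (auto simp: image_Im_Re_cbox)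
    show "Henstock_Kurzweil_Integration.content (?P ` cbox u v) = 1 * Henstock_Kurzweil_Integration.content (cbox u v)" for u v
      by (cases u; cases v) (simp add: image_swap_Complex_cbox content_cbox_Complex content_Pair mult.commute)
  qed (use \<open>(g has_integral integral S g) S\<close> in \<open>auto simp: S_def\<close>)
  then have "integral S g = integral (cbox (y0, x0) (y1, x1)) (\<lambda>p. g (?P p))"
    by (simp add: S_def image_Im_Re_cbox integral_unique)
  also have "\<dots> = integral (cbox y0 y1) (\<lambda>y. integral (cbox x0 x1) (\<lambda>x. g (?P (y, x))))"
  proof (rule integral_prod_continuous)
    have "continuous_on (cbox (y0, x0) (y1, x1)) ?P"
      by (auto simp: case_prod_beta intro!: continuous_intros)
    then show "continuous_on (cbox (y0, x0) (y1, x1)) (\<lambda>p. g (?P p))"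
      by (rule continuous_on_compose2[OF cont]) (simp add: image_swap_Complex_cbox)
  qed
  finally show "(LINT z:S|lborel. g z) = integral {y0..y1} (\<lambda>y. integral {x0..x1} (\<lambda>x. g (Complex x y)))"
    using set_borel_integral_eq_integral(2)[OF si] by simp
qed

lemma continuous_on_horizontal_line:
  assumes "continuous_on upper_half f" and "s > 0"
  shows "continuous_on A (\<lambda>x. f (Complex x s))"
  using assms by (intro continuous_on_compose2[OF assms(1)] continuous_intros) (auto simp: upper_half_iff)

lemma continuous_on_upper_half_Im_Re:
  assumes "continuous_on upper_half f"
  shows "continuous_on {p. fst p > 0} (\<lambda>(y, x). f (Complex x y))"
  unfolding case_prod_beta
  by (intro continuous_on_compose2[OF assms] continuous_intros) (auto simp: upper_half_iff)

lemma cbox_subset_fund_dom: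
  assumes "1 \<le> Y"
  shows "cbox (Complex (-1/2) Y) (Complex (1/2) Z) \<subseteq> fund_dom"
proof
  fix z assume "z \<in> cbox (Complex (-1/2) Y) (Complex (1/2) Z)"
  then have "Im z \<ge> 1" "\<bar>Re z\<bar> \<le> 1/2" using assms by (auto simp: in_cbox_complex_iff)
  moreover have "cmod z \<ge> \<bar>Im z\<bar>" by (rule abs_Im_le_cmod)
  ultimately show "z \<in> fund_dom" by (auto simp: fund_dom_def)
qed

lemma set_integrable_if_int_M_nonzero:
  assumes "int_M g \<noteq> 0"
  shows "set_integrable lborel fund_dom (\<lambda>z. g z / (Im z)^2)"
  using assms not_integrable_integral_eq
  unfolding int_M_def set_integrable_def set_lebesgue_integral_def by blast

lemma normalized_mass_in_strip:
  assumes f: "continuous_on upper_half f" and norm: "mu_f k f (\<lambda>_. 1) = 1" and "1 \<le> Y"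
  shows "integral {Y..Y+1} (\<lambda>y. y^k / y^2 * integral {-1/2..1/2} (\<lambda>x. (cmod (f (Complex x y)))^2)) \<le> 1"
proof -
  define h where "h z = 1 * Im z ^ k * (cmod (f z))^2 / (Im z)^2" for z
  define S where "S = cbox (Complex (-1/2) Y) (Complex (1/2) (Y+1))"
  have "continuous_on S f"
    using \<open>1 \<le> Y\<close> by (intro continuous_on_subset[OF f]) (auto simp: S_def in_cbox_complex_iff upper_half_iff)
  moreover have "\<forall>z\<in>S. Im z \<noteq> 0" using \<open>1 \<le> Y\<close> by (auto simp: S_def in_cbox_complex_iff)
  ultimately have "continuous_on S h" unfolding h_def by (intro continuous_intros) auto
  note S_integral = set_integral_cbox_Complex[of "-1/2" Y "1/2" "Y+1" h, folded S_def, OF this]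
  have "int_M (\<lambda>z. 1 * Im z ^ k * (cmod (f z))^2) \<noteq> 0"
    using norm by (simp add: mu_f_def)
  then have "set_integrable lborel fund_dom h"
    unfolding h_def by (rule set_integrable_if_int_M_nonzero)
  have "(LINT z:S|lborel. h z) \<le> (LINT z:fund_dom|lborel. h z)"
    unfolding set_lebesgue_integral_def
  proof (rule integral_mono)
    have "h z \<ge> 0" if "z \<in> fund_dom" for z using that by (simp add: h_def fund_dom_def)
    then show "indicat_real S z *\<^sub>R h z \<le> indicat_real fund_dom z *\<^sub>R h z" for z
      using cbox_subset_fund_dom[OF \<open>1 \<le> Y\<close>] by (auto simp: S_def indicator_def)
  qed (use S_integral(1) \<open>set_integrable lborel fund_dom h\<close> in \<open>simp_all add: set_integrable_def\<close>)
  then have le1: "integral {Y..Y+1} (\<lambda>y. integral {-1/2..1/2} (\<lambda>x. h (Complex x y))) \<le> 1"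
    using S_integral(2) norm by (simp add: mu_f_def int_M_def h_def)
  moreover have "integral {-1/2..1/2} (\<lambda>x. h (Complex x y))
      = y^k / y^2 * integral {-1/2..1/2} (\<lambda>x. (cmod (f (Complex x y)))^2)" for y
    by (simp add: h_def)
  ultimately show ?thesis by simp
qed

lemma normalized_exists_small_horocycle:
  assumes f: "continuous_on upper_half f" and norm: "mu_f k f (\<lambda>_. 1) = 1"
    and "2 \<le> k" and "1 \<le> Y"
  shows "\<exists>s\<in>{Y..Y+1}. (integral {-1/2..1/2} (\<lambda>x. cmod (f (Complex x s))))^2 \<le> Y^2 / Y^k"
proof -
  define Q where "Q y = integral {-1/2..1/2} (\<lambda>x. (cmod (f (Complex x y)))^2)" for y
  have "{Y..Y+1} \<times> cbox (-1/2) (1/2) \<subseteq> {p. fst p > 0}" using \<open>1 \<le> Y\<close> by auto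
  with continuous_on_upper_half_Im_Re[OF f]
  have "continuous_on ({Y..Y+1} \<times> cbox (-1/2) (1/2)) (\<lambda>(y, x). f (Complex x y))"
    by (rule continuous_on_subset)
  then have "continuous_on ({Y..Y+1} \<times> cbox (-1/2) (1/2)) (\<lambda>(y, x). (cmod (f (Complex x y)))^2)"
    unfolding case_prod_beta by (intro continuous_intros)
  then have Q_cont: "continuous_on {Y..Y+1} Q"
    unfolding Q_def using integral_continuous_on_param by fastforce
  have Q_nonneg: "Q y \<ge> 0" if "y \<ge> Y" for y
    unfolding Q_def using that \<open>1 \<le> Y\<close>
    by (intro integral_nonneg integrable_continuous_interval continuous_intros continuous_on_horizontal_line[OF f]) auto
  obtain s where s: "s \<in> {Y..Y+1}" and "Q s \<le> integral {Y..Y+1} Q"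
    using exists_le_integral_unit_interval[OF Q_cont] by blast
  then have "Y^(k-2) * Q s \<le> integral {Y..Y+1} (\<lambda>y. Y^(k-2) * Q y)"
    using \<open>1 \<le> Y\<close> by (simp add: mult_left_mono)
  also have "\<dots> \<le> integral {Y..Y+1} (\<lambda>y. y^k / y^2 * Q y)"
  proof (rule integral_le)
    fix y assume y: "y \<in> {Y..Y+1}"
    then have "y^k / y^2 = y^(k-2)" using \<open>1 \<le> Y\<close> \<open>2 \<le> k\<close> by (simp add: power_diff)
    moreover have "Y^(k-2) \<le> y^(k-2)" using y \<open>1 \<le> Y\<close> by (intro power_mono) auto
    ultimately show "Y^(k-2) * Q y \<le> y^k / y^2 * Q y"
      using Q_nonneg[of y] y by (simp add: mult_right_mono)
  qed (use \<open>1 \<le> Y\<close> Q_cont in \<open>auto intro!: integrable_continuous_interval continuous_intros\<close>)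
  also have "\<dots> \<le> 1"
    using normalized_mass_in_strip[OF f norm \<open>1 \<le> Y\<close>] by (simp add: Q_def)
  finally have "Q s \<le> 1 / Y^(k-2)"
    using \<open>1 \<le> Y\<close> by (simp add: pos_le_divide_eq mult.commute)
  also have "\<dots> = Y^2 / Y^k"
    using \<open>1 \<le> Y\<close> \<open>2 \<le> k\<close> by (simp add: power_diff)
  moreover have "(integral {-1/2..1/2} (\<lambda>x. cmod (f (Complex x s))))^2 \<le> Q s"
    using square_integral_le[of "-1/2" "1/2" "\<lambda>x. cmod (f (Complex x s))"] s \<open>1 \<le> Y\<close>
    by (simp add: Q_def continuous_on_norm continuous_on_horizontal_line[OF f])
  ultimately show ?thesis using s by force
qed

lemma normalized_periodic_cuspidal_sq_le:
  assumes f: "periodic_cuspidal f" and norm: "mu_f k f (\<lambda>_. 1) = 1"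
    and "2 \<le> k" and "2 \<le> Y" and z: "Im z = 2 * Y"
  shows "(cmod (f z))^2 \<le> 4 * exp (- 2 * pi * (Y - 1))^2 * (Y^2 / Y^k)"
proof -
  have "1 \<le> Y" using \<open>2 \<le> Y\<close> by simp
  have f_cont: "continuous_on upper_half f"
    using f by (simp add: periodic_cuspidal_def holomorphic_on_imp_continuous_on)
  obtain s where s: "s \<in> {Y..Y+1}"
    and small: "(integral {-1/2..1/2} (\<lambda>x. cmod (f (Complex x s))))^2 \<le> Y^2 / Y^k"
    using normalized_exists_small_horocycle[OF f_cont norm \<open>2 \<le> k\<close> \<open>1 \<le> Y\<close>] by blast
  have "s > 0" using s \<open>1 \<le> Y\<close> by auto
  define L where "L = integral {0..1} (\<lambda>t. cmod (f (Complex t s)))"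
  have "L = integral {-1/2..1/2} (\<lambda>t. cmod (f (Complex t s)))"
    unfolding L_def
  proof (rule integral_periodic_shift_half)
    fix t
    have "Complex (t + 1) s = Complex t s + of_int 1" by (simp add: complex_eq_iff)
    moreover have "Complex t s \<in> upper_half" using \<open>s > 0\<close> by (simp add: upper_half_iff)
    ultimately show "cmod (f (Complex (t + 1) s)) = cmod (f (Complex t s))"
      using f unfolding periodic_cuspidal_def by metis
  qed (intro continuous_intros continuous_on_horizontal_line[OF f_cont \<open>s > 0\<close>])
  with small have L2: "L^2 \<le> Y^2 / Y^k" by simp
  have "s + 1 \<le> Im z" using s z \<open>2 \<le> Y\<close> by simp
  then have "cmod (f z) \<le> 2 * exp (- 2 * pi * (Im z - s)) * L"
    unfolding L_def by (rule periodic_cuspidal_le_horocycle_integral[OF f \<open>s > 0\<close>])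
  moreover have "exp (- 2 * pi * (Im z - s)) \<le> exp (- 2 * pi * (Y - 1))"
    using s z by simp
  moreover have "L \<ge> 0" unfolding L_def
    by (intro integral_nonneg integrable_continuous_interval continuous_intros
        continuous_on_horizontal_line[OF f_cont \<open>s > 0\<close>]) auto
  ultimately have "cmod (f z) \<le> 2 * exp (- 2 * pi * (Y - 1)) * L"
    by (smt (verit) mult_right_mono)
  then have "(cmod (f z))^2 \<le> (2 * exp (- 2 * pi * (Y - 1)) * L)^2"
    by (rule power_mono) simp
  also have "\<dots> = 4 * exp (- 2 * pi * (Y - 1))^2 * L^2"
    by (simp add: power_mult_distrib)
  also have "\<dots> \<le> 4 * exp (- 2 * pi * (Y - 1))^2 * (Y^2 / Y^k)"
    by (rule mult_left_mono[OF L2]) simp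
  finally show ?thesis .
qed

lemma normalized_periodic_cuspidal_pointwise_bound:
  assumes f: "periodic_cuspidal f" and norm: "mu_f k f (\<lambda>_. 1) = 1"
    and "2 \<le> k" and z: "4 \<le> Im z"
  shows "Im z ^ k * (cmod (f z))^2 / (Im z)^2 \<le> 2^k * exp (4 * pi) * exp (- 2 * pi * Im z)"
proof -
  define Y where "Y = Im z / 2"
  define E where "E = exp (- 2 * pi * (Y - 1))^2"
  have "2 \<le> Y" "Im z = 2 * Y" using z by (auto simp: Y_def)
  have "Im z ^ k / (Im z)^2 * (cmod (f z))^2 \<le> Im z ^ k / (Im z)^2 * (4 * E * (Y^2 / Y^k))"
    using normalized_periodic_cuspidal_sq_le[OF f norm \<open>2 \<le> k\<close> \<open>2 \<le> Y\<close> \<open>Im z = 2 * Y\<close>] \<open>2 \<le> Y\<close>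
    by (intro mult_left_mono) (auto simp: E_def Y_def)
  also have "\<dots> = (2 * Y) ^ k / (2 * Y)^2 * (4 * (Y^2 / Y^k)) * E"
    by (simp add: \<open>Im z = 2 * Y\<close> ac_simps)
  also have "(2 * Y) ^ k / (2 * Y)^2 * (4 * (Y^2 / Y^k)) = 2^k"
    using \<open>2 \<le> Y\<close> by (simp add: power_mult_distrib)
  also have "E = exp (4 * pi) * exp (- 2 * pi * Im z)"
    by (simp add: E_def \<open>Im z = 2 * Y\<close> power2_eq_square algebra_simps flip: exp_add)
  finally show ?thesis by (simp add: mult.assoc)
qed

lemma integral_eq_integral_on_support:
  fixes G :: "'n::euclidean_space \<Rightarrow> 'a::banach"
  assumes "G integrable_on T" and "T \<subseteq> S" and "\<And>y. y \<in> S - T \<Longrightarrow> G y = 0"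
  shows "integral S G = integral T G"
proof -
  define G' where "G' y = (if y \<in> T then G y else 0)" for y
  have "(G' has_integral integral T G) T"
    using integrable_integral[OF assms(1)] by (rule has_integral_eq[rotated]) (simp add: G'_def)
  then have "(G' has_integral integral T G) S"
    by (rule has_integral_on_superset) (use assms(2) in \<open>auto simp: G'_def\<close>)
  moreover have "integral S G = integral S G'"
    using assms(3) by (intro integral_cong) (auto simp: G'_def)
  ultimately show ?thesis by (simp add: integral_unique)
qed

lemma integral_dilate_inverse_square:
  fixes G :: "real \<Rightarrow> real"
  assumes "0 < a" and "a \<le> b" and "0 < H"
  shows "integral {a*H..b*H} (\<lambda>y. G (y / H) / y^2) = integral {a..b} (\<lambda>t. G t / t^2) / H"
proof -
  have "(\<lambda>x. x / (1 / H)) ` {a..b} = {a*H..b*H}"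
    by (subst image_divide_atLeastAtMost) (use assms in auto)
  then have stretch: "integral {a*H..b*H} (\<lambda>y. G (y / H) / (y / H)^2) = H * integral {a..b} (\<lambda>t. G t / t^2)"
    using integral_stretch_real[of "1 / H" a b "\<lambda>t. G t / t^2"] assms by (simp add: divide_inverse mult.commute)
  have "(\<lambda>y. G (y / H) / y^2) = (\<lambda>y. G (y / H) / (y / H)^2 / H^2)"
    using assms by (simp add: power_divide)
  then have "integral {a*H..b*H} (\<lambda>y. G (y / H) / y^2) = integral {a*H..b*H} (\<lambda>y. G (y / H) / (y / H)^2) / H^2"
    by (simp only: integral_divide)
  also have "\<dots> = integral {a..b} (\<lambda>t. G t / t^2) / H"
    using assms by (simp only: stretch) (simp add: power2_eq_square)
  finally show ?thesis .
qed

lemma int_M_eq_set_integral_cbox: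
  assumes "1 \<le> c"
    and vanish: "\<And>z. z \<in> fund_dom \<Longrightarrow> z \<notin> cbox (Complex (-1/2) c) (Complex (1/2) d) \<Longrightarrow> g z = 0"
  shows "int_M g = (LINT z:cbox (Complex (-1/2) c) (Complex (1/2) d)|lborel. g z / (Im z)^2)"
proof -
  have "(\<lambda>z. indicator fund_dom z *\<^sub>R (g z / (Im z)^2))
      = (\<lambda>z. indicator (cbox (Complex (-1/2) c) (Complex (1/2) d)) z *\<^sub>R (g z / (Im z)^2))"
    using cbox_subset_fund_dom[OF \<open>1 \<le> c\<close>, of d] vanish by (intro ext) (auto simp: indicator_def)
  then show ?thesis unfolding int_M_def set_lebesgue_integral_def by (rule arg_cong)
qed

lemma abs_int_M_le_cbox:
  assumes "1 \<le> c" and "c \<le> d"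
    and vanish: "\<And>z. z \<in> fund_dom \<Longrightarrow> z \<notin> cbox (Complex (-1/2) c) (Complex (1/2) d) \<Longrightarrow> g z = 0"
    and bound: "\<And>z. z \<in> cbox (Complex (-1/2) c) (Complex (1/2) d) \<Longrightarrow> \<bar>g z\<bar> / (Im z)^2 \<le> C"
  shows "\<bar>int_M g\<bar> \<le> C * (d - c)"
proof -
  define S where "S = cbox (Complex (-1/2) c) (Complex (1/2) d)"
  have "Complex (-1/2) c \<in> S" using \<open>c \<le> d\<close> by (simp add: S_def in_cbox_complex_iff)
  then have "C \<ge> 0" using bound[of "Complex (-1/2) c"] by (simp add: S_def) (meson divide_nonneg_nonneg abs_ge_zero zero_le_power2 order_trans)
  have int_M_S: "int_M g = (LINT z:S|lborel. g z / (Im z)^2)"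
    unfolding S_def by (rule int_M_eq_set_integral_cbox[OF \<open>1 \<le> c\<close> vanish])
  have const: "set_integrable lborel S (\<lambda>_. C)" "(LINT z:S|lborel. C) = C * (d - c)"
    using set_integral_cbox_Complex[of "-1/2" c "1/2" d "\<lambda>_. C"] \<open>c \<le> d\<close> by (simp_all add: S_def)
  show ?thesis
  proof (cases "set_integrable lborel S (\<lambda>z. g z / (Im z)^2)")
    case True
    have "\<bar>int_M g\<bar> \<le> (LINT z:S|lborel. \<bar>g z / (Im z)^2\<bar>)"
      using set_integral_norm_bound[OF True] by (simp add: int_M_S)
    also have "\<dots> \<le> (LINT z:S|lborel. C)"
      using True const(1) bound by (intro set_integral_mono set_integrable_abs) (auto simp: S_def abs_divide)
    finally show ?thesis using const(2) by simp
  next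
    case False
    then have "int_M g = 0"
      unfolding int_M_S set_integrable_def set_lebesgue_integral_def by (rule not_integrable_integral_eq)
    then show ?thesis using \<open>C \<ge> 0\<close> \<open>c \<le> d\<close> by simp
  qed
qed

lemma MH_psiV_on_cbox:
  assumes "1 < a" and "0 < H" and "z \<in> cbox (Complex (-1/2) (a*H)) (Complex (1/2) (b*H))"
  shows "MH H (psiV V) z = V (Im z / H)"
proof -
  have "H < a * H" and "a * H \<le> Im z" using assms by (auto simp: in_cbox_complex_iff)
  then have "H < Im z" by linarith
  then have "1 < Im z / H" using \<open>0 < H\<close> by (simp add: less_divide_eq)
  with \<open>H < Im z\<close> show ?thesis by (simp add: MH_def psiV_def)
qed

lemma MH_psiV_off_cbox:
  assumes "0 < H" and V: "\<forall>y>0. y \<notin> {a..b} \<longrightarrow> V y = 0"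
    and "z \<in> fund_dom" and "z \<notin> cbox (Complex (-1/2) (a*H)) (Complex (1/2) (b*H))"
  shows "MH H (psiV V) z = 0"
proof (cases "Im z > H")
  case True
  then have "1 < Im z / H" using \<open>0 < H\<close> by (simp add: less_divide_eq)
  moreover have "Im z / H \<notin> {a..b}"
    using assms by (auto simp: fund_dom_def in_cbox_complex_iff field_simps)
  ultimately show ?thesis using True V by (simp add: MH_def psiV_def)
qed (simp add: MH_def)

lemma int_M_MH_psiV:
  assumes "1 < a" and "a \<le> b" and "1 \<le> H"
    and V: "\<forall>y>0. y \<notin> {a..b} \<longrightarrow> V y = 0" and V_cont: "continuous_on {0<..} V"
  shows "int_M (MH H (psiV V)) = integral {0<..} (\<lambda>y. V y / y^2) / H"
proof -
  define S where "S = cbox (Complex (-1/2) (a*H)) (Complex (1/2) (b*H))"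
  have "1 \<le> a * H" using mult_mono[of 1 a 1 H] assms by simp
  have "int_M (MH H (psiV V)) = (LINT z:S|lborel. MH H (psiV V) z / (Im z)^2)"
    unfolding S_def using \<open>1 \<le> a * H\<close> MH_psiV_off_cbox[OF _ V] \<open>1 \<le> H\<close>
    by (intro int_M_eq_set_integral_cbox) auto
  also have "\<dots> = (LINT z:S|lborel. V (Im z / H) / (Im z)^2)"
    using MH_psiV_on_cbox[OF \<open>1 < a\<close>] \<open>1 \<le> H\<close> by (intro set_lebesgue_integral_cong) (auto simp: S_def)
  also have "\<dots> = integral {a*H..b*H} (\<lambda>y. V (y / H) / y^2)"
  proof -
    have pos: "Im z > 0" if "z \<in> S" for z using that \<open>1 \<le> a * H\<close> by (auto simp: S_def in_cbox_complex_iff)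
    then have "continuous_on S (\<lambda>z. V (Im z / H) / (Im z)^2)"
      using \<open>1 \<le> H\<close> by (intro continuous_intros continuous_on_compose2[OF V_cont]) (auto dest: pos)
    then show ?thesis unfolding S_def by (simp add: set_integral_cbox_Complex(2))
  qed
  also have "\<dots> = integral {a..b} (\<lambda>y. V y / y^2) / H"
    using assms by (intro integral_dilate_inverse_square) auto
  also have "integral {a..b} (\<lambda>y. V y / y^2) = integral {0<..} (\<lambda>y. V y / y^2)"
    using assms by (intro integral_eq_integral_on_support[symmetric] integrable_continuous_interval
        continuous_intros continuous_on_subset[OF V_cont]) auto
  finally show ?thesis .
qed

text \<open>This is where theta >= 1, i.e. k - 1 <= H, enters: the factor 2^k coming from the
  normalisation is absorbed by the decay at height a H.\<close>

lemma two_pow_mul_exp_le: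
  assumes "1 \<le> H" and "real k - 1 \<le> H" and "1 \<le> a"
  shows "2^k * exp (- 2 * pi * (a * H)) \<le> 2 / H^3"
proof -
  have "(2::real)^k \<le> 2 * exp 1 ^ (k - 1)"
    using power_mono[of "2::real" "exp 1" "k - 1"] exp_ge_add_one_self[of 1] by (cases k) auto
  moreover have "exp 1 ^ (k - 1) \<le> exp H"
    using assms by (simp add: exp_of_nat_mult[symmetric] of_nat_diff)
  ultimately have "(2::real)^k \<le> 2 * exp H" by linarith
  moreover have "exp (- 2 * pi * (a * H)) \<le> exp (- 6 * H)"
    using pi_gt3 assms mult_mono[of 3 pi 1 a] mult_right_mono[of 6 "2 * pi * a" H] by simp
  moreover have "H^3 \<le> exp (5 * H)"
  proof -
    have "H^3 \<le> H^5" using assms by (simp add: power_increasing)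
    also have "\<dots> \<le> exp H ^ 5"
      using exp_ge_add_one_self[of H] assms by (intro power_mono) linarith+
    finally show ?thesis by (simp add: exp_of_nat_mult[symmetric])
  qed
  ultimately have "2^k * exp (- 2 * pi * (a * H)) \<le> 2 * exp H * exp (- 6 * H)"
    by (intro mult_mono) auto
  also have "\<dots> = 2 / exp (5 * H)" by (simp add: exp_minus field_simps flip: exp_add)
  also have "\<dots> \<le> 2 / H^3" using \<open>H^3 \<le> exp (5 * H)\<close> assms by (intro divide_left_mono) auto
  finally show ?thesis .
qed

lemma Hk_imp_periodic_cuspidal_normalized:
  assumes "f \<in> Hk k"
  shows "periodic_cuspidal f" and "mu_f k f (\<lambda>_. 1) = 1"
  using assms cusp_form_imp_periodic_cuspidal by (auto simp: Hk_def)

lemma smooth_pos_imp_continuous_on: "smooth_pos V \<Longrightarrow> continuous_on {0<..} V"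
  unfolding smooth_pos_def
  by (metis continuous_at_imp_continuous_on differentiable_imp_continuous_within funpow_0 greaterThan_iff)

lemma abs_mu_f_MH_psiV_le:
  assumes f: "f \<in> Hk k" and "2 \<le> k" and "1 < a" and "a \<le> b"
    and V: "\<forall>y>0. y \<notin> {a..b} \<longrightarrow> V y = 0" and Vm: "\<forall>t\<in>{a..b}. \<bar>V t\<bar> \<le> Vm"
    and "4 \<le> H" and "real k - 1 \<le> H"
  shows "\<bar>mu_f k f (MH H (psiV V))\<bar> \<le> 2 * exp (4 * pi) * Vm * (b - a) / H^2"
proof -
  note f_cusp = Hk_imp_periodic_cuspidal_normalized[OF f]
  have "0 \<le> Vm" using Vm \<open>a \<le> b\<close> by force
  have "4 \<le> a * H" using mult_mono[of 1 a 4 H] assms by simp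
  define C where "C = Vm * (2^k * exp (4 * pi) * exp (- 2 * pi * (a * H)))"
  have "\<bar>mu_f k f (MH H (psiV V))\<bar> \<le> C * (b * H - a * H)"
    unfolding mu_f_def
  proof (rule abs_int_M_le_cbox)
    fix z assume z: "z \<in> cbox (Complex (-1/2) (a*H)) (Complex (1/2) (b*H))"
    then have "a * H \<le> Im z" "Im z / H \<in> {a..b}" using \<open>4 \<le> H\<close> by (auto simp: in_cbox_complex_iff field_simps)
    have "\<bar>MH H (psiV V) z * Im z ^ k * (cmod (f z))^2\<bar> / (Im z)^2
        = \<bar>V (Im z / H)\<bar> * (Im z ^ k * (cmod (f z))^2 / (Im z)^2)"
      using MH_psiV_on_cbox[OF \<open>1 < a\<close> _ z] \<open>4 \<le> H\<close> \<open>4 \<le> a * H\<close> \<open>a * H \<le> Im z\<close>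
      by (simp add: abs_mult)
    also have "\<dots> \<le> Vm * (2^k * exp (4 * pi) * exp (- 2 * pi * Im z))"
      using Vm \<open>Im z / H \<in> {a..b}\<close> \<open>4 \<le> a * H\<close> \<open>a * H \<le> Im z\<close>
        normalized_periodic_cuspidal_pointwise_bound[OF f_cusp \<open>2 \<le> k\<close>, of z]
      by (intro mult_mono) auto
    also have "\<dots> \<le> C"
      using Vm \<open>a \<le> b\<close> \<open>a * H \<le> Im z\<close> by (auto simp: C_def intro!: mult_left_mono)
    finally show "\<bar>MH H (psiV V) z * Im z ^ k * (cmod (f z))^2\<bar> / (Im z)^2 \<le> C" .
  qed (use \<open>4 \<le> a * H\<close> \<open>a \<le> b\<close> \<open>4 \<le> H\<close> MH_psiV_off_cbox[OF _ V] in auto)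
  also have "\<dots> = exp (4 * pi) * Vm * (b - a) * H * (2^k * exp (- 2 * pi * (a * H)))"
    by (simp add: C_def algebra_simps)
  also have "\<dots> \<le> exp (4 * pi) * Vm * (b - a) * H * (2 / H^3)"
    using \<open>0 \<le> Vm\<close> \<open>a \<le> b\<close> \<open>4 \<le> H\<close> \<open>1 < a\<close> two_pow_mul_exp_le[of H k a] \<open>real k - 1 \<le> H\<close>
    by (intro mult_left_mono) auto
  also have "\<dots> = 2 * exp (4 * pi) * Vm * (b - a) / H^2"
    using \<open>4 \<le> H\<close> by (simp add: power2_eq_square power3_eq_cube)
  finally show ?thesis .
qed

lemma nu_MH_psiV:
  assumes "1 < a" and "a \<le> b" and "1 \<le> H"
    and "\<forall>y>0. y \<notin> {a..b} \<longrightarrow> V y = 0" and "continuous_on {0<..} V"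
  shows "nu (MH H (psiV V)) = 3 * integral {0<..} (\<lambda>y. V y / y^2) / pi / H"
  using int_M_MH_psiV[OF assms] by (simp add: nu_def volM_def mult_ac)

lemma inverse_square_le_eps_inverse:
  fixes C c H \<epsilon> :: real
  assumes "0 < \<epsilon>" and "c \<noteq> 0" and "0 < H" and "C / (\<epsilon> * \<bar>c\<bar>) \<le> H"
  shows "C / H^2 \<le> \<epsilon> * \<bar>c / H\<bar>"
proof -
  have "C \<le> \<epsilon> * \<bar>c\<bar> * H" using assms by (simp add: pos_divide_le_eq mult_ac)
  then have "C / H^2 \<le> \<epsilon> * \<bar>c\<bar> * H / H^2" using assms by (simp add: divide_right_mono)
  then show ?thesis using assms by (simp add: abs_divide power2_eq_square)
qed

theorem mainTheorem2:
  fixes \<theta> :: real and V :: "real \<Rightarrow> real"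
  assumes "\<theta> \<ge> 1"
    and "smooth_pos V"
    and "\<exists>a b. 1 < a \<and> a \<le> b \<and> (\<forall>y>0. y \<notin> {a..b} \<longrightarrow> V y = 0)"
    and "integral {0<..} (\<lambda>y. V y / y^2) \<noteq> 0"
  shows "\<forall>\<epsilon>>0. \<exists>K. \<forall>k f. k \<ge> K \<and> even k \<and> f \<in> Hk k \<longrightarrow>
           \<bar>mu_f k f (MH ((real k - 1) powr \<theta>) (psiV V))\<bar>
             \<le> \<epsilon> * \<bar>nu (MH ((real k - 1) powr \<theta>) (psiV V))\<bar>"
proof (intro allI impI)
  fix \<epsilon> :: real assume "\<epsilon> > 0"
  obtain a b where ab: "1 < a" "a \<le> b" and V: "\<forall>y>0. y \<notin> {a..b} \<longrightarrow> V y = 0"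
    using assms(3) by blast
  note V_cont = smooth_pos_imp_continuous_on[OF assms(2)]
  have "continuous_on {a..b} V" using ab by (intro continuous_on_subset[OF V_cont]) auto
  then obtain Vm where "\<forall>t\<in>{a..b}. \<bar>V t\<bar> \<le> Vm"
    using continuous_on_compact_bound[OF compact_Icc] by (metis real_norm_def)
  define c where "c = 3 * integral {0<..} (\<lambda>y. V y / y^2) / pi"
  define C where "C = 2 * exp (4 * pi) * Vm * (b - a)"
  have "c \<noteq> 0" using assms(4) by (simp add: c_def)
  show "\<exists>K. \<forall>k f. k \<ge> K \<and> even k \<and> f \<in> Hk k \<longrightarrow>
      \<bar>mu_f k f (MH ((real k - 1) powr \<theta>) (psiV V))\<bar> \<le> \<epsilon> * \<bar>nu (MH ((real k - 1) powr \<theta>) (psiV V))\<bar>"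
  proof (intro exI[of _ "nat \<lceil>max 5 (C / (\<epsilon> * \<bar>c\<bar>))\<rceil> + 2"] allI impI)
    fix k f assume kf: "nat \<lceil>max 5 (C / (\<epsilon> * \<bar>c\<bar>))\<rceil> + 2 \<le> k \<and> even k \<and> f \<in> Hk k"
    define H where "H = (real k - 1) powr \<theta>"
    have k_large: "max 5 (C / (\<epsilon> * \<bar>c\<bar>)) \<le> real k - 1" using kf by linarith
    then have "real k - 1 \<le> H" using powr_mono[of 1 \<theta> "real k - 1"] assms(1) by (simp add: H_def)
    with k_large have "4 \<le> H" "2 \<le> k" "C / (\<epsilon> * \<bar>c\<bar>) \<le> H" by linarith+
    have "\<bar>mu_f k f (MH H (psiV V))\<bar> \<le> C / H^2"
      using abs_mu_f_MH_psiV_le[OF _ \<open>2 \<le> k\<close> ab V] kf \<open>4 \<le> H\<close> \<open>real k - 1 \<le> H\<close> \<open>\<forall>t\<in>{a..b}. \<bar>V t\<bar> \<le> Vm\<close>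
      by (simp add: C_def)
    also have "\<dots> \<le> \<epsilon> * \<bar>c / H\<bar>"
      using \<open>\<epsilon> > 0\<close> \<open>c \<noteq> 0\<close> \<open>4 \<le> H\<close> \<open>C / (\<epsilon> * \<bar>c\<bar>) \<le> H\<close> by (intro inverse_square_le_eps_inverse) auto
    also have "c / H = nu (MH H (psiV V))"
      using nu_MH_psiV[OF ab _ V V_cont] \<open>4 \<le> H\<close> by (simp add: c_def)
    finally show "\<bar>mu_f k f (MH ((real k - 1) powr \<theta>) (psiV V))\<bar> \<le> \<epsilon> * \<bar>nu (MH ((real k - 1) powr \<theta>) (psiV V))\<bar>"
      by (simp add: H_def)
  qed
qed

end
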